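(* If $A\in\widehat{\Omega}[0,1]$, then $x\mapsto\int_0^1A(s)\,dx(s)$ (Riemann–Stieltjes integral) defines a continuous linear functional on $CBV[0,1]$.
   Context: $CBV[0,1]$ denotes the Banach space of continuous real functions of bounded Jordan variation on $[0,1]$ with norm $\|x\|_{BV}=|x(0)|+\operatorname{var}_{[0,1]}x$. For $\varepsilon>0$ and $a<b$, a bounded $A\colon[a,b]\to\mathbb R$ belongs to $\Omega_\varepsilon[a,b]$ if there exists $\delta>0$ such that $\sup_{t\le\tau\le\sigma\le s}|A(\sigma)-A(\tau)|\le\varepsilon$ whenever $t,s\in[a,b]$ and $0\le s-t\le\delta$. $\Omega[0,1]$ is the set of bounded $A\colon[0,1]\to\mathbb R$ such that for every $\varepsilon>0$ there is $a\in(0,1)$ with $A|_{[0,a]}\in\Omega_\varepsilon[0,a]$ and $A|_{[a,1]}$ of bounded variation on $[a,1]$. $\widehat{\Omega}[0,1]=\Omega[0,1]\cup C[0,1]\cup BV[0,1]$. *)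

theory Defs
  imports "HOL-Analysis.Analysis"
begin

definition is_partition :: "real \<Rightarrow> real \<Rightarrow> nat \<Rightarrow> (nat \<Rightarrow> real) \<Rightarrow> bool" where
  "is_partition a b n t \<longleftrightarrow> t 0 = a \<and> t n = b \<and> (\<forall>i<n. t i < t (Suc i))"

definition variation_on :: "real \<Rightarrow> real \<Rightarrow> (real \<Rightarrow> real) \<Rightarrow> real" where
  "variation_on a b f =
     Sup {(\<Sum>i<n. \<bar>f (t (Suc i)) - f (t i)\<bar>) | n t. is_partition a b n t}"

definition bounded_variation_on :: "real \<Rightarrow> real \<Rightarrow> (real \<Rightarrow> real) \<Rightarrow> bool" where
  "bounded_variation_on a b f \<longleftrightarrow>
     bdd_above {(\<Sum>i<n. \<bar>f (t (Suc i)) - f (t i)\<bar>) | n t. is_partition a b n t}"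

definition CBV :: "(real \<Rightarrow> real) set" where
  "CBV = {x. continuous_on {0..1} x \<and> bounded_variation_on 0 1 x}"

definition BV_norm :: "(real \<Rightarrow> real) \<Rightarrow> real" where
  "BV_norm x = \<bar>x 0\<bar> + variation_on 0 1 x"

definition bounded_on :: "real \<Rightarrow> real \<Rightarrow> (real \<Rightarrow> real) \<Rightarrow> bool" where
  "bounded_on a b A \<longleftrightarrow> (\<exists>M. \<forall>u\<in>{a..b}. \<bar>A u\<bar> \<le> M)"

definition Omega_eps :: "real \<Rightarrow> real \<Rightarrow> real \<Rightarrow> (real \<Rightarrow> real) \<Rightarrow> bool" where
  "Omega_eps \<epsilon> a b A \<longleftrightarrow> bounded_on a b A \<and>
     (\<exists>\<delta>>0. \<forall>t s. t \<in> {a..b} \<longrightarrow> s \<in> {a..b} \<longrightarrow> 0 \<le> s - t \<longrightarrow> s - t \<le> \<delta> \<longrightarrow>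
        (\<forall>\<tau> \<sigma>. t \<le> \<tau> \<longrightarrow> \<tau> \<le> \<sigma> \<longrightarrow> \<sigma> \<le> s \<longrightarrow> \<bar>A \<sigma> - A \<tau>\<bar> \<le> \<epsilon>))"

definition Omega :: "(real \<Rightarrow> real) set" where
  "Omega = {A. bounded_on 0 1 A \<and>
     (\<forall>\<epsilon>>0. \<exists>a. 0 < a \<and> a < 1 \<and> Omega_eps \<epsilon> 0 a A \<and> bounded_variation_on a 1 A)}"

definition Omega_hat :: "(real \<Rightarrow> real) set" where
  "Omega_hat = Omega \<union> {A. continuous_on {0..1} A} \<union> {A. bounded_variation_on 0 1 A}"

definition has_RS_integral :: "(real \<Rightarrow> real) \<Rightarrow> (real \<Rightarrow> real) \<Rightarrow> real \<Rightarrow> bool" where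
  "has_RS_integral A x I \<longleftrightarrow>
     (\<forall>\<epsilon>>0. \<exists>\<delta>>0. \<forall>n t \<xi>. is_partition 0 1 n t \<longrightarrow>
        (\<forall>i<n. t (Suc i) - t i < \<delta>) \<longrightarrow>
        (\<forall>i<n. t i \<le> \<xi> i \<and> \<xi> i \<le> t (Suc i)) \<longrightarrow>
        \<bar>(\<Sum>i<n. A (\<xi> i) * (x (t (Suc i)) - x (t i))) - I\<bar> < \<epsilon>)"

end

theory Submission
  imports Defs
begin

text \<open>Two Riemann--Stieltjes sums of \<open>A\<close> against \<open>x\<close> are compared on the common refinement of their
  partitions: if the increments of \<open>x\<close> are dominated by those of an increasing \<open>v\<close> and \<open>A\<close> oscillates
  by at most \<open>e\<close> at scale \<open>2 * \<delta>\<close>, two \<open>\<delta>\<close>-fine sums differ by at most \<open>e * (v 1 - v 0)\<close>. This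
  handles continuous \<open>A\<close>. For \<open>A\<close> of bounded variation, summation by parts exchanges the roles of
  \<open>A\<close> and the continuous \<open>x\<close>. A function in \<open>Omega\<close> splits, for each \<open>e\<close>, into a part of
  oscillation at most \<open>e\<close> and a part of bounded variation. So the sums are Cauchy as the mesh tends
  to \<open>0\<close>, and the integral exists; it is linear in \<open>x\<close>, and the estimate
  \<open>\<bar>\<integral> A dx\<bar> \<le> sup \<bar>A\<bar> * var x\<close> gives continuity for the norm of \<open>CBV\<close>.\<close>

(* (n, t, \<xi>) stands for the division points t 0, ..., t n and the tags \<xi> 0, ..., \<xi> (n - 1). *)
type_synonym tagged_points = "nat \<times> (nat \<Rightarrow> real) \<times> (nat \<Rightarrow> real)"

fun RS_sum :: "(real \<Rightarrow> real) \<Rightarrow> (real \<Rightarrow> real) \<Rightarrow> tagged_points \<Rightarrow> real" where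
  "RS_sum f g (n, t, \<xi>) = (\<Sum>i<n. f (\<xi> i) * (g (t (Suc i)) - g (t i)))"

lemma RS_sum_add: "RS_sum (\<lambda>s. f s + h s) g p = RS_sum f g p + RS_sum h g p"
  by (cases p) (simp add: distrib_right sum.distrib)

lemma RS_sum_linear_right:
  "RS_sum f (\<lambda>s. c * x s + a * y s) p = c * RS_sum f x p + a * RS_sum f y p"
proof (cases p)
  case (fields n t \<xi>)
  have "RS_sum f (\<lambda>s. c * x s + a * y s) (n, t, \<xi>)
      = (\<Sum>i<n. c * (f (\<xi> i) * (x (t (Suc i)) - x (t i))) + a * (f (\<xi> i) * (y (t (Suc i)) - y (t i))))"
    by (simp add: algebra_simps)
  also have "\<dots> = c * RS_sum f x (n, t, \<xi>) + a * RS_sum f y (n, t, \<xi>)"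
    by (simp add: sum.distrib sum_distrib_left)
  finally show ?thesis
    using fields by simp
qed

fun fine_partition :: "real \<Rightarrow> tagged_points \<Rightarrow> bool" where
  "fine_partition \<delta> (n, t, \<xi>) \<longleftrightarrow> is_partition 0 1 n t \<and>
     (\<forall>i<n. t (Suc i) - t i < \<delta>) \<and> (\<forall>i<n. t i \<le> \<xi> i \<and> \<xi> i \<le> t (Suc i))"

(* Unlike fine_partition, degenerate subintervals are allowed: dual_points produces them. *)
fun weak_fine_partition :: "real \<Rightarrow> tagged_points \<Rightarrow> bool" where
  "weak_fine_partition \<delta> (n, t, \<xi>) \<longleftrightarrow> t 0 = 0 \<and> t n = 1 \<and>
     (\<forall>i<n. t i \<le> \<xi> i \<and> \<xi> i \<le> t (Suc i) \<and> t (Suc i) - t i \<le> \<delta>)"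

lemma fine_partition_mono: "fine_partition \<delta> p \<Longrightarrow> \<delta> \<le> \<delta>' \<Longrightarrow> fine_partition \<delta>' p"
  by (cases p) force

lemma weak_fine_partition_mono: "weak_fine_partition \<delta> p \<Longrightarrow> \<delta> \<le> \<delta>' \<Longrightarrow> weak_fine_partition \<delta>' p"
  by (cases p) force

lemma fine_imp_weak_fine_partition: "fine_partition \<delta> p \<Longrightarrow> weak_fine_partition \<delta> p"
  by (cases p) (auto simp: is_partition_def less_imp_le)

lemma weak_fine_partition_points:
  assumes "weak_fine_partition \<delta> (n, t, \<xi>)" "i \<le> j" "j \<le> n"
  shows "0 \<le> t i" "t i \<le> t j" "t j \<le> 1"
proof -
  have step: "t k \<le> t (Suc k)" if "k < n" for k
    using assms(1) that by fastforce
  have mono: "t i \<le> t j" if "i \<le> j" "j \<le> n" for i j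
    using that by (induction j rule: dec_induct) (auto intro: order_trans[OF _ step])
  have "t 0 = 0" "t n = 1"
    using assms(1) by auto
  then show "0 \<le> t i" "t i \<le> t j" "t j \<le> 1"
    using mono[of 0 i] mono[of i j] mono[of j n] assms(2,3) by auto
qed

lemma weak_fine_partition_nonempty: "weak_fine_partition \<delta> (n, t, \<xi>) \<Longrightarrow> 0 < n"
  by (cases n) auto

lemma weak_fine_partition_tag_range:
  "weak_fine_partition \<delta> (n, t, \<xi>) \<Longrightarrow> i < n \<Longrightarrow> \<xi> i \<in> {0..1}"
  using weak_fine_partition_points[of \<delta> n t \<xi> i "Suc i"] by force

lemma RS_sum_const:
  "weak_fine_partition \<delta> (n, t, \<xi>) \<Longrightarrow> RS_sum (\<lambda>_. c) g (n, t, \<xi>) = c * (g 1 - g 0)"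
  by (simp add: sum_distrib_left[symmetric] sum_lessThan_telescope[of "\<lambda>i. g (t i)"])

section \<open>Comparing two Riemann--Stieltjes sums\<close>

definition increments_le :: "(real \<Rightarrow> real) \<Rightarrow> (real \<Rightarrow> real) \<Rightarrow> bool" where
  "increments_le g v \<longleftrightarrow> (\<forall>p q. 0 \<le> p \<longrightarrow> p \<le> q \<longrightarrow> q \<le> 1 \<longrightarrow> \<bar>g q - g p\<bar> \<le> v q - v p)"

lemma increments_le_imp_le: "increments_le g v \<Longrightarrow> v 0 \<le> v 1"
  unfolding increments_le_def by (metis abs_ge_zero diff_ge_0_iff_ge order_trans zero_le_one order_refl)

lemma increments_le_imp_bounded:
  assumes "increments_le f v" "s \<in> {0..1}"
  shows "\<bar>f s\<bar> \<le> \<bar>f 0\<bar> + (v 1 - v 0)"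
proof -
  have "\<bar>f s - f 0\<bar> \<le> v s - v 0" "\<bar>f 1 - f s\<bar> \<le> v 1 - v s"
    using assms unfolding increments_le_def by auto
  moreover have "\<bar>f s\<bar> \<le> \<bar>f 0\<bar> + \<bar>f s - f 0\<bar>" "0 \<le> \<bar>f 1 - f s\<bar>"
    by (simp_all add: abs_triangle_ineq2_sym[of "f s" "f 0", simplified abs_minus_commute] abs_triangle_ineq4)
  ultimately show ?thesis
    by linarith
qed

definition oscillation_le :: "real \<Rightarrow> real \<Rightarrow> (real \<Rightarrow> real) \<Rightarrow> bool" where
  "oscillation_le d e f \<longleftrightarrow> (\<forall>a\<in>{0..1}. \<forall>b\<in>{0..1}. \<bar>a - b\<bar> \<le> d \<longrightarrow> \<bar>f a - f b\<bar> \<le> e)"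

lemma oscillation_le_mono: "oscillation_le d e f \<Longrightarrow> d' \<le> d \<Longrightarrow> oscillation_le d' e f"
  unfolding oscillation_le_def by force

lemma oscillation_le_nonneg: "oscillation_le d e f \<Longrightarrow> 0 \<le> d \<Longrightarrow> 0 \<le> e"
  unfolding oscillation_le_def by (auto dest!: bspec[where x=0])

lemma continuous_on_imp_oscillation_le:
  assumes "continuous_on {0..1} f" "0 < e"
  shows "\<exists>d>0. oscillation_le d e f"
proof -
  have "uniformly_continuous_on {0..1} f"
    using assms(1) by (simp add: compact_uniformly_continuous)
  then obtain d where "d > 0" and d: "\<forall>a\<in>{0..1}. \<forall>b\<in>{0..1}. dist b a < d \<longrightarrow> dist (f b) (f a) < e"
    using assms(2) unfolding uniformly_continuous_on_def by blast
  have "oscillation_le (d / 2) e f"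
    unfolding oscillation_le_def
  proof (intro ballI impI)
    fix a b :: real
    assume "a \<in> {0..1}" "b \<in> {0..1}" "\<bar>a - b\<bar> \<le> d / 2"
    then have "dist (f a) (f b) < e"
      using d \<open>d > 0\<close> by (simp add: dist_real_def)
    then show "\<bar>f a - f b\<bar> \<le> e"
      by (simp add: dist_real_def)
  qed
  then show ?thesis
    using \<open>d > 0\<close> half_gt_zero by blast
qed

(* For a <= b and c <= d, the increment of g over the intersection of [a, b] and [c, d];
   it is 0 if that intersection has at most one point. *)
definition overlap_increment :: "(real \<Rightarrow> real) \<Rightarrow> real \<Rightarrow> real \<Rightarrow> real \<Rightarrow> real \<Rightarrow> real" where
  "overlap_increment g a b c d = g (max a (min b d)) - g (max a (min b c))"

lemma overlap_increment_eq_0: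
  assumes "c \<le> d" "d \<le> a \<or> b \<le> c"
  shows "overlap_increment g a b c d = 0"
proof -
  have "max a (min b d) = max a (min b c)"
    using assms unfolding max_def min_def by auto
  then show ?thesis
    by (simp add: overlap_increment_def)
qed

lemma overlap_increment_commute:
  assumes "a \<le> b" "c \<le> d"
  shows "overlap_increment g a b c d = overlap_increment g c d a b"
proof (cases "d \<le> a \<or> b \<le> c")
  case True
  then show ?thesis
    using assms overlap_increment_eq_0[of c d a b g] overlap_increment_eq_0[of a b c d g] by auto
next
  case False
  then show ?thesis
    using assms by (auto simp: overlap_increment_def max_def min_def)
qed

lemma abs_overlap_increment_le:
  assumes "increments_le g v" "0 \<le> a" "a \<le> b" "b \<le> 1" "c \<le> d"
  shows "\<bar>overlap_increment g a b c d\<bar> \<le> overlap_increment v a b c d"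
proof -
  have "0 \<le> max a (min b c)" "max a (min b c) \<le> max a (min b d)" "max a (min b d) \<le> 1"
    using assms by auto
  then show ?thesis
    using assms(1) unfolding increments_le_def overlap_increment_def by blast
qed

lemma sum_overlap_increment:
  assumes "u 0 \<le> a" "a \<le> b" "b \<le> u m"
  shows "(\<Sum>j<m. overlap_increment g a b (u j) (u (Suc j))) = g b - g a"
proof -
  have "max a (min b (u m)) = b" "max a (min b (u 0)) = a"
    using assms by auto
  then show ?thesis
    unfolding overlap_increment_def
    by (simp add: sum_lessThan_telescope[of "\<lambda>j. g (max a (min b (u j)))"])
qed

lemma RS_sum_refinement_fst:
  assumes "weak_fine_partition \<delta> (n, t, \<xi>)" "weak_fine_partition \<delta>' (m, u, \<eta>)"
  shows "RS_sum f g (n, t, \<xi>)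
    = (\<Sum>i<n. \<Sum>j<m. f (\<xi> i) * overlap_increment g (t i) (t (Suc i)) (u j) (u (Suc j)))"
  unfolding RS_sum.simps sum_distrib_left[symmetric]
proof (intro sum.cong refl arg_cong[where f = "(*) _"])
  fix i
  assume "i \<in> {..<n}"
  then show "g (t (Suc i)) - g (t i) = (\<Sum>j<m. overlap_increment g (t i) (t (Suc i)) (u j) (u (Suc j)))"
    using weak_fine_partition_points[OF assms(1), of i "Suc i"] assms(2)
    by (intro sum_overlap_increment[symmetric]) auto
qed

lemma RS_sum_refinement_snd:
  assumes "weak_fine_partition \<delta> (n, t, \<xi>)" "weak_fine_partition \<delta>' (m, u, \<eta>)"
  shows "RS_sum f g (m, u, \<eta>)
    = (\<Sum>i<n. \<Sum>j<m. f (\<eta> j) * overlap_increment g (t i) (t (Suc i)) (u j) (u (Suc j)))"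
proof -
  have "RS_sum f g (m, u, \<eta>)
      = (\<Sum>j<m. \<Sum>i<n. f (\<eta> j) * overlap_increment g (u j) (u (Suc j)) (t i) (t (Suc i)))"
    using assms(2,1) by (rule RS_sum_refinement_fst)
  also have "\<dots> = (\<Sum>j<m. \<Sum>i<n. f (\<eta> j) * overlap_increment g (t i) (t (Suc i)) (u j) (u (Suc j)))"
    using weak_fine_partition_points[OF assms(1)] weak_fine_partition_points[OF assms(2)]
    by (intro sum.cong refl arg_cong[where f = "(*) _"] overlap_increment_commute) auto
  finally show ?thesis
    by (simp add: sum.swap[of _ "{..<m}"])
qed

lemma tags_close_if_overlap_increment_nonzero:
  assumes "weak_fine_partition \<delta> (n, t, \<xi>)" "weak_fine_partition \<delta> (m, u, \<eta>)" "i < n" "j < m"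
    and "overlap_increment g (t i) (t (Suc i)) (u j) (u (Suc j)) \<noteq> 0"
  shows "\<bar>\<xi> i - \<eta> j\<bar> \<le> 2 * \<delta>"
proof -
  have "t i \<le> \<xi> i" "\<xi> i \<le> t (Suc i)" "t (Suc i) - t i \<le> \<delta>"
    "u j \<le> \<eta> j" "\<eta> j \<le> u (Suc j)" "u (Suc j) - u j \<le> \<delta>"
    using assms(1-4) by auto
  moreover have "t i < u (Suc j)" "u j < t (Suc i)"
    using assms(5) overlap_increment_eq_0 \<open>u j \<le> \<eta> j\<close> \<open>\<eta> j \<le> u (Suc j)\<close> by (meson not_le order_trans)+
  ultimately show ?thesis
    by linarith
qed

lemma RS_sum_diff_le:
  assumes P: "weak_fine_partition \<delta> (n, t, \<xi>)" and Q: "weak_fine_partition \<delta> (m, u, \<eta>)"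
    and f: "oscillation_le (2 * \<delta>) e f" and g: "increments_le g v"
  shows "\<bar>RS_sum f g (n, t, \<xi>) - RS_sum f g (m, u, \<eta>)\<bar> \<le> e * (v 1 - v 0)"
proof -
  define D where "D h i j = overlap_increment h (t i) (t (Suc i)) (u j) (u (Suc j))" for h i j
  have "0 \<le> e"
    using P weak_fine_partition_nonempty[OF P] by (intro oscillation_le_nonneg[OF f]) force
  have cell: "\<bar>(f (\<xi> i) - f (\<eta> j)) * D g i j\<bar> \<le> e * D v i j" if ij: "i < n" "j < m" for i j
  proof -
    have "\<bar>D g i j\<bar> \<le> D v i j"
      unfolding D_def using g weak_fine_partition_points[OF P, of i "Suc i"]
        weak_fine_partition_points[OF Q, of j "Suc j"] ij
      by (intro abs_overlap_increment_le) auto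
    moreover have "\<bar>f (\<xi> i) - f (\<eta> j)\<bar> \<le> e" if "D g i j \<noteq> 0"
    proof -
      have "\<bar>\<xi> i - \<eta> j\<bar> \<le> 2 * \<delta>"
        using tags_close_if_overlap_increment_nonzero[OF P Q ij] that unfolding D_def by blast
      then show ?thesis
        using f weak_fine_partition_tag_range[OF P ij(1)] weak_fine_partition_tag_range[OF Q ij(2)]
        unfolding oscillation_le_def by auto
    qed
    ultimately show ?thesis
      using \<open>0 \<le> e\<close> by (cases "D g i j = 0") (auto simp: abs_mult intro: mult_mono)
  qed
  have "\<bar>RS_sum f g (n, t, \<xi>) - RS_sum f g (m, u, \<eta>)\<bar>
      = \<bar>\<Sum>i<n. \<Sum>j<m. (f (\<xi> i) - f (\<eta> j)) * D g i j\<bar>"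
    unfolding RS_sum_refinement_fst[OF P Q] RS_sum_refinement_snd[OF P Q] D_def
    by (simp add: sum_subtractf left_diff_distrib)
  also have "\<dots> \<le> (\<Sum>i<n. \<Sum>j<m. e * D v i j)"
    by (rule order_trans[OF sum_abs sum_mono[OF order_trans[OF sum_abs sum_mono[OF cell]]]]) auto
  also have "\<dots> = RS_sum (\<lambda>_. e) v (n, t, \<xi>)"
    unfolding RS_sum_refinement_fst[OF P Q] D_def ..
  also have "\<dots> = e * (v 1 - v 0)"
    using P by (rule RS_sum_const)
  finally show ?thesis .
qed

section \<open>Summation by parts\<close>

(* The tags of a partition, padded by 0 and 1, are the division points of a partition
   tagged by the old division points. *)
definition dual_points :: "nat \<Rightarrow> (nat \<Rightarrow> real) \<Rightarrow> nat \<Rightarrow> real" where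
  "dual_points n \<xi> k = (if k = 0 then 0 else if k \<le> n then \<xi> (k - 1) else 1)"

lemma weak_fine_partition_dual:
  assumes P: "weak_fine_partition \<delta> (n, t, \<xi>)"
  shows "weak_fine_partition (2 * \<delta>) (Suc n, dual_points n \<xi>, t)"
proof -
  have tag: "t k \<le> \<xi> k" "\<xi> k \<le> t (Suc k)" "t (Suc k) - t k \<le> \<delta>" if "k < n" for k
    using P that by auto
  have "dual_points n \<xi> k \<le> t k \<and> t k \<le> dual_points n \<xi> (Suc k)
      \<and> dual_points n \<xi> (Suc k) - dual_points n \<xi> k \<le> 2 * \<delta>" if k: "k < Suc n" for k
  proof (cases k)
    case 0
    then show ?thesis
      using P tag[of 0] weak_fine_partition_nonempty[OF P] by (auto simp: dual_points_def)
  next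
    case (Suc j)
    consider "Suc j < n" | "Suc j = n"
      using Suc k by linarith
    then show ?thesis
    proof cases
      case 1
      then show ?thesis
        using tag[OF Suc_lessD[OF 1]] tag[OF 1] Suc by (auto simp: dual_points_def)
    next
      case 2
      then show ?thesis
        using P tag[of j] Suc by (auto simp: dual_points_def)
    qed
  qed
  then show ?thesis
    by (simp add: dual_points_def)
qed

lemma sum_by_parts:
  fixes X B :: "nat \<Rightarrow> 'a::comm_ring"
  shows "(\<Sum>k<Suc n. X k * (B (Suc k) - B k))
    = X n * B (Suc n) - X 0 * B 0 - (\<Sum>k<n. B (Suc k) * (X (Suc k) - X k))"
  by (induction n) (simp_all add: algebra_simps)

lemma RS_sum_by_parts:
  assumes "weak_fine_partition \<delta> (n, t, \<xi>)"
  shows "RS_sum f g (n, t, \<xi>) = f 1 * g 1 - f 0 * g 0 - RS_sum g f (Suc n, dual_points n \<xi>, t)"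
proof -
  have "RS_sum g f (Suc n, dual_points n \<xi>, t)
      = g (t n) * f (dual_points n \<xi> (Suc n)) - g (t 0) * f (dual_points n \<xi> 0)
        - (\<Sum>k<n. f (dual_points n \<xi> (Suc k)) * (g (t (Suc k)) - g (t k)))"
    unfolding RS_sum.simps by (rule sum_by_parts)
  also have "(\<Sum>k<n. f (dual_points n \<xi> (Suc k)) * (g (t (Suc k)) - g (t k))) = RS_sum f g (n, t, \<xi>)"
    by (simp add: dual_points_def)
  finally show ?thesis
    using assms by (simp add: dual_points_def)
qed

section \<open>Jordan variation\<close>

abbreviation variation_sums :: "real \<Rightarrow> real \<Rightarrow> (real \<Rightarrow> real) \<Rightarrow> real set" where
  "variation_sums a b f \<equiv> {(\<Sum>i<n. \<bar>f (t (Suc i)) - f (t i)\<bar>) | n t. is_partition a b n t}"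

lemma variation_sums_nonempty: "a \<le> b \<Longrightarrow> variation_sums a b f \<noteq> {}"
proof (cases "a = b")
  case True
  then have "is_partition a b 0 (\<lambda>_. a)"
    by (simp add: is_partition_def)
  then show ?thesis
    by blast
next
  case False
  assume "a \<le> b"
  with False have "is_partition a b 1 (\<lambda>i. if i = 0 then a else b)"
    by (simp add: is_partition_def)
  then show ?thesis
    by blast
qed

lemma variation_sums_extend:
  assumes "y \<in> variation_sums a p f" "p < q"
  shows "y + \<bar>f q - f p\<bar> \<in> variation_sums a q f"
proof -
  obtain n t where t: "is_partition a p n t" and y: "y = (\<Sum>i<n. \<bar>f (t (Suc i)) - f (t i)\<bar>)"
    using assms(1) by blast
  define t' where "t' = t(Suc n := q)"
  have "is_partition a q (Suc n) t'"
    using t assms(2) by (auto simp: is_partition_def t'_def less_Suc_eq)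
  moreover have "(\<Sum>i<n. \<bar>f (t' (Suc i)) - f (t' i)\<bar>) = y"
    unfolding y t'_def by (intro sum.cong) auto
  then have "(\<Sum>i<Suc n. \<bar>f (t' (Suc i)) - f (t' i)\<bar>) = y + \<bar>f q - f p\<bar>"
    using t by (simp add: t'_def is_partition_def)
  ultimately show ?thesis
    by (metis (mono_tags, lifting) mem_Collect_eq)
qed

lemma bounded_variation_on_initial_segment:
  assumes "bounded_variation_on a b f" "a \<le> c" "c \<le> b"
  shows "bounded_variation_on a c f"
proof (cases "c = b")
  case False
  obtain B where B: "\<forall>y\<in>variation_sums a b f. y \<le> B"
    using assms(1) unfolding bounded_variation_on_def bdd_above_def by blast
  have "y \<le> B" if "y \<in> variation_sums a c f" for y
  proof -
    have "y + \<bar>f b - f c\<bar> \<le> B"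
      using B variation_sums_extend[OF that, of b] False assms(3) by simp
    then show ?thesis
      using abs_ge_zero[of "f b - f c"] by linarith
  qed
  then show ?thesis
    unfolding bounded_variation_on_def bdd_above_def by blast
qed (use assms in simp)

lemma partition_sum_le_variation:
  assumes "bounded_variation_on a b f" "is_partition a b n t"
  shows "(\<Sum>i<n. \<bar>f (t (Suc i)) - f (t i)\<bar>) \<le> variation_on a b f"
  using assms unfolding bounded_variation_on_def variation_on_def by (blast intro: cSup_upper)

lemma bounded_variation_increment_le:
  assumes "bounded_variation_on a b f" "a \<le> p" "p \<le> q" "q \<le> b"
  shows "\<bar>f q - f p\<bar> \<le> variation_on a q f - variation_on a p f"
proof (cases "p = q")
  case False
  then have "p < q"
    using assms by simp
  have bdd: "bdd_above (variation_sums a q f)"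
    using bounded_variation_on_initial_segment[OF assms(1)] assms
    unfolding bounded_variation_on_def by simp
  have "Sup (variation_sums a p f) \<le> Sup (variation_sums a q f) - \<bar>f q - f p\<bar>"
  proof (rule cSup_least)
    show "variation_sums a p f \<noteq> {}"
      using assms(2) by (rule variation_sums_nonempty)
    fix y
    assume "y \<in> variation_sums a p f"
    then have "y + \<bar>f q - f p\<bar> \<le> Sup (variation_sums a q f)"
      using variation_sums_extend[OF _ \<open>p < q\<close>] bdd by (blast intro: cSup_upper)
    then show "y \<le> Sup (variation_sums a q f) - \<bar>f q - f p\<bar>"
      by simp
  qed
  then show ?thesis
    unfolding variation_on_def by simp
qed simp

lemma increments_le_variation:
  "bounded_variation_on 0 1 f \<Longrightarrow> increments_le f (\<lambda>q. variation_on 0 q f)"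
  unfolding increments_le_def using bounded_variation_increment_le by blast

lemma bounded_variation_on_diff:
  assumes "bounded_variation_on a b f" "bounded_variation_on a b g"
  shows "bounded_variation_on a b (\<lambda>s. f s - g s)"
proof -
  obtain Bf Bg where Bf: "\<forall>y\<in>variation_sums a b f. y \<le> Bf" and Bg: "\<forall>y\<in>variation_sums a b g. y \<le> Bg"
    using assms unfolding bounded_variation_on_def bdd_above_def by meson
  have "y \<le> Bf + Bg" if y_mem: "y \<in> variation_sums a b (\<lambda>s. f s - g s)" for y
  proof -
    obtain n t where t: "is_partition a b n t"
      and y: "y = (\<Sum>i<n. \<bar>(f (t (Suc i)) - g (t (Suc i))) - (f (t i) - g (t i))\<bar>)"
      using y_mem by blast
    have "y \<le> (\<Sum>i<n. \<bar>f (t (Suc i)) - f (t i)\<bar>) + (\<Sum>i<n. \<bar>g (t (Suc i)) - g (t i)\<bar>)"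
      unfolding y sum.distrib[symmetric] by (intro sum_mono) linarith
    also have "\<dots> \<le> Bf + Bg"
      using t Bf Bg by (intro add_mono) blast+
    finally show ?thesis .
  qed
  then show ?thesis
    unfolding bounded_variation_on_def bdd_above_def by blast
qed

definition RS_Cauchy :: "(real \<Rightarrow> real) \<Rightarrow> (real \<Rightarrow> real) \<Rightarrow> bool" where
  "RS_Cauchy f g \<longleftrightarrow> (\<forall>\<epsilon>>0. \<exists>\<delta>>0. \<forall>p q. weak_fine_partition \<delta> p \<longrightarrow> weak_fine_partition \<delta> q \<longrightarrow>
     \<bar>RS_sum f g p - RS_sum f g q\<bar> \<le> \<epsilon>)"

(* Summation by parts exchanges the roles of integrand and integrator, so that the continuity
   of g becomes a small oscillation of the new integrand. *)
lemma RS_Cauchy_if_increments_le: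
  assumes g: "continuous_on {0..1} g" and f: "increments_le f w"
  shows "RS_Cauchy f g"
  unfolding RS_Cauchy_def split_paired_All
proof (intro allI impI)
  fix \<epsilon> :: real
  assume "\<epsilon> > 0"
  define e where "e = \<epsilon> / (w 1 - w 0 + 1)"
  have "0 < e" "e * (w 1 - w 0) \<le> \<epsilon>"
    using increments_le_imp_le[OF f] \<open>\<epsilon> > 0\<close> by (auto simp: e_def field_simps)
  obtain d where "d > 0" and osc: "oscillation_le (2 * (2 * (d / 4))) e g"
    using continuous_on_imp_oscillation_le[OF g \<open>0 < e\<close>] by auto
  show "\<exists>\<delta>>0. \<forall>n t \<xi> m u \<eta>. weak_fine_partition \<delta> (n, t, \<xi>) \<longrightarrow> weak_fine_partition \<delta> (m, u, \<eta>) \<longrightarrow>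
     \<bar>RS_sum f g (n, t, \<xi>) - RS_sum f g (m, u, \<eta>)\<bar> \<le> \<epsilon>"
  proof (intro exI conjI allI impI)
    fix n t \<xi> m u \<eta>
    assume P: "weak_fine_partition (d / 4) (n, t, \<xi>)" and Q: "weak_fine_partition (d / 4) (m, u, \<eta>)"
    have "\<bar>RS_sum f g (n, t, \<xi>) - RS_sum f g (m, u, \<eta>)\<bar>
        = \<bar>RS_sum g f (Suc n, dual_points n \<xi>, t) - RS_sum g f (Suc m, dual_points m \<eta>, u)\<bar>"
      unfolding RS_sum_by_parts[OF P] RS_sum_by_parts[OF Q] by (simp add: abs_minus_commute)
    also have "\<dots> \<le> e * (w 1 - w 0)"
      using weak_fine_partition_dual[OF P] weak_fine_partition_dual[OF Q] osc f by (rule RS_sum_diff_le)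
    finally show "\<bar>RS_sum f g (n, t, \<xi>) - RS_sum f g (m, u, \<eta>)\<bar> \<le> \<epsilon>"
      using \<open>e * (w 1 - w 0) \<le> \<epsilon>\<close> by linarith
  qed (use \<open>d > 0\<close> in simp)
qed

(* The property shared by the three classes making up Omega_hat; the part of bounded variation
   is given through a majorant w of its increments. *)
definition osc_plus_BV :: "(real \<Rightarrow> real) \<Rightarrow> bool" where
  "osc_plus_BV f \<longleftrightarrow> (\<forall>e>0. \<exists>d>0. \<exists>f1 f2 w.
     f = (\<lambda>s. f1 s + f2 s) \<and> oscillation_le d e f1 \<and> increments_le f2 w)"

lemma RS_Cauchy_if_osc_plus_BV:
  assumes g: "continuous_on {0..1} g" "increments_le g v" and f: "osc_plus_BV f"
  shows "RS_Cauchy f g"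
  unfolding RS_Cauchy_def split_paired_All
proof (intro allI impI)
  fix \<epsilon> :: real
  assume "\<epsilon> > 0"
  define e where "e = \<epsilon> / (2 * (v 1 - v 0 + 1))"
  have "0 < e" "e * (v 1 - v 0) \<le> \<epsilon> / 2"
    using increments_le_imp_le[OF g(2)] \<open>\<epsilon> > 0\<close> by (auto simp: e_def field_simps)
  then obtain d f1 f2 w where "d > 0" and split: "f = (\<lambda>s. f1 s + f2 s)"
    and f1: "oscillation_le d e f1" and f2: "increments_le f2 w"
    using f unfolding osc_plus_BV_def by blast
  obtain \<delta> where "\<delta> > 0" and \<delta>: "\<forall>p q. weak_fine_partition \<delta> p \<longrightarrow> weak_fine_partition \<delta> q \<longrightarrow>
      \<bar>RS_sum f2 g p - RS_sum f2 g q\<bar> \<le> \<epsilon> / 2"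
    using RS_Cauchy_if_increments_le[OF g(1) f2] \<open>\<epsilon> > 0\<close> unfolding RS_Cauchy_def
    by (meson half_gt_zero)
  show "\<exists>\<delta>>0. \<forall>n t \<xi> m u \<eta>. weak_fine_partition \<delta> (n, t, \<xi>) \<longrightarrow> weak_fine_partition \<delta> (m, u, \<eta>) \<longrightarrow>
     \<bar>RS_sum f g (n, t, \<xi>) - RS_sum f g (m, u, \<eta>)\<bar> \<le> \<epsilon>"
  proof (intro exI conjI allI impI)
    show "min (d / 2) \<delta> > 0"
      using \<open>d > 0\<close> \<open>\<delta> > 0\<close> by simp
    fix n t \<xi> m u \<eta>
    assume P: "weak_fine_partition (min (d / 2) \<delta>) (n, t, \<xi>)"
      and Q: "weak_fine_partition (min (d / 2) \<delta>) (m, u, \<eta>)"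
    have "oscillation_le (2 * min (d / 2) \<delta>) e f1"
      using f1 by (rule oscillation_le_mono) simp
    then have "\<bar>RS_sum f1 g (n, t, \<xi>) - RS_sum f1 g (m, u, \<eta>)\<bar> \<le> e * (v 1 - v 0)"
      using P Q g(2) by (intro RS_sum_diff_le)
    moreover have "\<bar>RS_sum f2 g (n, t, \<xi>) - RS_sum f2 g (m, u, \<eta>)\<bar> \<le> \<epsilon> / 2"
      using \<delta> P Q weak_fine_partition_mono by (meson min.cobounded2)
    ultimately show "\<bar>RS_sum f g (n, t, \<xi>) - RS_sum f g (m, u, \<eta>)\<bar> \<le> \<epsilon>"
      unfolding split RS_sum_add using \<open>e * (v 1 - v 0) \<le> \<epsilon> / 2\<close> by linarith
  qed
qed

lemma continuous_imp_osc_plus_BV: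
  assumes "continuous_on {0..1} f"
  shows "osc_plus_BV f"
  unfolding osc_plus_BV_def
proof (intro allI impI)
  fix e :: real
  assume "e > 0"
  then obtain d where "d > 0" "oscillation_le d e f"
    using continuous_on_imp_oscillation_le[OF assms] by blast
  then show "\<exists>d>0. \<exists>f1 f2 w. f = (\<lambda>s. f1 s + f2 s) \<and> oscillation_le d e f1 \<and> increments_le f2 w"
  proof (intro exI conjI)
    show "f = (\<lambda>s. f s + 0)"
      by simp
    show "increments_le (\<lambda>_. 0) (\<lambda>_. 0)"
      by (simp add: increments_le_def)
  qed
qed

lemma bounded_variation_imp_osc_plus_BV:
  assumes "bounded_variation_on 0 1 f"
  shows "osc_plus_BV f"
  unfolding osc_plus_BV_def
proof (intro allI impI exI conjI)
  fix e :: real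
  assume "e > 0"
  show "(1::real) > 0" "f = (\<lambda>s. 0 + f s)"
    by simp_all
  show "oscillation_le 1 e (\<lambda>_. 0)"
    using \<open>e > 0\<close> by (simp add: oscillation_le_def)
  show "increments_le f (\<lambda>q. variation_on 0 q f)"
    using assms by (rule increments_le_variation)
qed

lemma Omega_imp_osc_plus_BV:
  assumes "A \<in> Omega"
  shows "osc_plus_BV A"
  unfolding osc_plus_BV_def
proof (intro allI impI)
  fix e :: real
  assume "e > 0"
  then obtain a where a: "0 < a" "a < 1" "Omega_eps e 0 a A" "bounded_variation_on a 1 A"
    using assms unfolding Omega_def by blast
  then obtain d where "d > 0" and d: "\<forall>t s. t \<in> {0..a} \<longrightarrow> s \<in> {0..a} \<longrightarrow> 0 \<le> s - t \<longrightarrow> s - t \<le> d \<longrightarrow>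
      (\<forall>\<tau> \<sigma>. t \<le> \<tau> \<longrightarrow> \<tau> \<le> \<sigma> \<longrightarrow> \<sigma> \<le> s \<longrightarrow> \<bar>A \<sigma> - A \<tau>\<bar> \<le> e)"
    unfolding Omega_eps_def by blast
  have close: "\<bar>A q - A p\<bar> \<le> e" if "p \<in> {0..a}" "q \<in> {0..a}" "p \<le> q" "q - p \<le> d" for p q
    using d[rule_format, OF that(1,2) _ that(4) order_refl that(3) order_refl] that(3) by simp
  show "\<exists>d>0. \<exists>f1 f2 w. A = (\<lambda>s. f1 s + f2 s) \<and> oscillation_le d e f1 \<and> increments_le f2 w"
  proof (intro exI conjI)
    show "A = (\<lambda>s. A (min s a) + (A (max a s) - A a))"
      by (auto simp: min_def max_def)
    show "oscillation_le d e (\<lambda>s. A (min s a))"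
      unfolding oscillation_le_def
    proof (intro ballI impI)
      fix p q :: real
      assume "p \<in> {0..1}" "q \<in> {0..1}" "\<bar>p - q\<bar> \<le> d"
      then have "min p a \<in> {0..a}" "min q a \<in> {0..a}" "\<bar>min p a - min q a\<bar> \<le> d"
        using a(1) by auto
      then show "\<bar>A (min p a) - A (min q a)\<bar> \<le> e"
        using close[of "min p a" "min q a"] close[of "min q a" "min p a"]
        by (cases "min p a \<le> min q a") (simp_all add: abs_minus_commute)
    qed
    show "increments_le (\<lambda>s. A (max a s) - A a) (\<lambda>q. variation_on a (max a q) A)"
      unfolding increments_le_def
      using bounded_variation_increment_le[OF a(4)] a(2) by simp
  qed (use \<open>d > 0\<close> in simp)
qed

lemma Omega_hat_imp_osc_plus_BV: "A \<in> Omega_hat \<Longrightarrow> osc_plus_BV A"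
  unfolding Omega_hat_def
  using Omega_imp_osc_plus_BV continuous_imp_osc_plus_BV bounded_variation_imp_osc_plus_BV by blast

section \<open>Limits as the mesh tends to zero\<close>

definition mesh_filter :: "tagged_points filter" where
  "mesh_filter = (INF \<delta>\<in>{0<..}. principal {p. fine_partition \<delta> p})"

lemma eventually_mesh_filter:
  "eventually P mesh_filter \<longleftrightarrow> (\<exists>\<delta>>0. \<forall>p. fine_partition \<delta> p \<longrightarrow> P p)"
  unfolding mesh_filter_def
proof (subst eventually_INF_base)
  fix a b :: real
  assume "a \<in> {0<..}" "b \<in> {0<..}"
  then show "\<exists>\<delta>\<in>{0<..}. principal {p. fine_partition \<delta> p}
      \<le> inf (principal {p. fine_partition a p}) (principal {p. fine_partition b p})"
    by (intro bexI[of _ "min a b"]) (auto intro: fine_partition_mono)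
qed (auto simp: eventually_principal)

lemma fine_partition_exists:
  assumes "0 < \<delta>"
  shows "\<exists>p. fine_partition \<delta> p"
proof -
  obtain n :: nat where "n > 0" "inverse (real n) < \<delta>"
    using ex_inverse_of_nat_less[OF assms] by blast
  define t where "t i = real i / real n" for i
  have "is_partition 0 1 n t"
    using \<open>n > 0\<close> by (simp add: is_partition_def t_def divide_strict_right_mono)
  moreover have "t (Suc i) - t i < \<delta>" for i
    using \<open>inverse (real n) < \<delta>\<close> by (simp add: t_def divide_inverse algebra_simps)
  ultimately have "fine_partition \<delta> (n, t, t)"
    by (auto simp: is_partition_def less_imp_le)
  then show ?thesis ..
qed

lemma mesh_filter_ne_bot: "mesh_filter \<noteq> bot"
proof
  assume "mesh_filter = bot"
  then obtain \<delta> where "\<delta> > 0" "\<forall>p. \<not> fine_partition \<delta> p"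
    using eventually_mesh_filter[of "\<lambda>_. False"] by auto
  then show False
    using fine_partition_exists by blast
qed

lemma has_RS_integral_iff_tendsto: "has_RS_integral f g I \<longleftrightarrow> (RS_sum f g \<longlongrightarrow> I) mesh_filter"
  unfolding tendsto_iff dist_real_def eventually_mesh_filter has_RS_integral_def split_paired_All
  by (simp add: imp_conjL)

lemma has_RS_integral_unique: "has_RS_integral f g I \<Longrightarrow> has_RS_integral f g J \<Longrightarrow> I = J"
  unfolding has_RS_integral_iff_tendsto using mesh_filter_ne_bot by (rule tendsto_unique)

lemma has_RS_integral_linear:
  "has_RS_integral f x I \<Longrightarrow> has_RS_integral f y J \<Longrightarrow>
    has_RS_integral f (\<lambda>s. c * x s + a * y s) (c * I + a * J)"
  unfolding has_RS_integral_iff_tendsto RS_sum_linear_right[abs_def] by (intro tendsto_add tendsto_mult_left)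

lemma cauchy_filter_RS_sum:
  assumes "RS_Cauchy f g"
  shows "cauchy_filter (filtermap (RS_sum f g) mesh_filter)"
  unfolding cauchy_filter_metric_filtermap
proof (intro allI impI)
  fix e :: real
  assume "e > 0"
  then obtain \<delta> where "\<delta> > 0" and \<delta>: "\<forall>p q. weak_fine_partition \<delta> p \<longrightarrow> weak_fine_partition \<delta> q \<longrightarrow>
      \<bar>RS_sum f g p - RS_sum f g q\<bar> \<le> e / 2"
    using assms unfolding RS_Cauchy_def by (meson half_gt_zero)
  have "dist (RS_sum f g p) (RS_sum f g q) < e" if "fine_partition \<delta> p" "fine_partition \<delta> q" for p q
  proof -
    have "\<bar>RS_sum f g p - RS_sum f g q\<bar> \<le> e / 2"
      using \<delta> that fine_imp_weak_fine_partition by blast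
    then show ?thesis
      using \<open>e > 0\<close> by (simp add: dist_real_def)
  qed
  moreover have "eventually (fine_partition \<delta>) mesh_filter"
    using \<open>\<delta> > 0\<close> eventually_mesh_filter by blast
  ultimately show "\<exists>P. eventually P mesh_filter \<and> (\<forall>p q. P p \<and> P q \<longrightarrow> dist (RS_sum f g p) (RS_sum f g q) < e)"
    by blast
qed

lemma RS_Cauchy_imp_has_RS_integral:
  assumes "RS_Cauchy f g"
  shows "\<exists>I. has_RS_integral f g I"
proof -
  have "filtermap (RS_sum f g) mesh_filter \<noteq> bot"
    using mesh_filter_ne_bot by (simp add: filtermap_bot_iff)
  then obtain I where "filtermap (RS_sum f g) mesh_filter \<le> nhds I"
    using cauchy_filter_complete_converges[OF cauchy_filter_RS_sum[OF assms] complete_UNIV]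
    by (metis top.extremum principal_UNIV)
  then show ?thesis
    unfolding has_RS_integral_iff_tendsto filterlim_def by blast
qed

lemma uniform_bound_nonneg:
  fixes f :: "real \<Rightarrow> real"
  assumes "\<forall>s\<in>{0..1}. \<bar>f s\<bar> \<le> M"
  shows "0 \<le> M"
proof -
  have "\<bar>f 0\<bar> \<le> M"
    using assms by simp
  then show ?thesis
    by (rule order_trans[OF abs_ge_zero])
qed

lemma abs_RS_sum_le:
  assumes P: "fine_partition \<delta> (n, t, \<xi>)" and f: "\<forall>s\<in>{0..1}. \<bar>f s\<bar> \<le> M"
    and g: "bounded_variation_on 0 1 g"
  shows "\<bar>RS_sum f g (n, t, \<xi>)\<bar> \<le> M * variation_on 0 1 g"
proof -
  have "\<bar>f (\<xi> i)\<bar> \<le> M" if "i < n" for i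
    using f weak_fine_partition_tag_range[OF fine_imp_weak_fine_partition[OF P] that] by blast
  then have "\<bar>RS_sum f g (n, t, \<xi>)\<bar> \<le> (\<Sum>i<n. M * \<bar>g (t (Suc i)) - g (t i)\<bar>)"
    unfolding RS_sum.simps by (intro order_trans[OF sum_abs] sum_mono) (simp add: abs_mult mult_right_mono)
  also have "\<dots> \<le> M * variation_on 0 1 g"
    unfolding sum_distrib_left[symmetric] using partition_sum_le_variation[OF g] P uniform_bound_nonneg[OF f]
    by (intro mult_left_mono) auto
  finally show ?thesis .
qed

lemma has_RS_integral_abs_le:
  assumes I: "has_RS_integral f g I" and f: "\<forall>s\<in>{0..1}. \<bar>f s\<bar> \<le> M"
    and g: "bounded_variation_on 0 1 g"
  shows "\<bar>I\<bar> \<le> M * variation_on 0 1 g"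
proof -
  have "eventually (\<lambda>p. \<bar>RS_sum f g p\<bar> \<le> M * variation_on 0 1 g) mesh_filter"
    unfolding eventually_mesh_filter split_paired_All using abs_RS_sum_le[OF _ f g] zero_less_one by blast
  then show ?thesis
    using tendsto_rabs[OF I[unfolded has_RS_integral_iff_tendsto]] mesh_filter_ne_bot
    by (intro tendsto_upperbound)
qed

lemma has_RS_integral_diff_abs_le:
  assumes "has_RS_integral f x I" "has_RS_integral f y K" "\<forall>s\<in>{0..1}. \<bar>f s\<bar> \<le> M"
    and "x \<in> CBV" "y \<in> CBV"
  shows "\<bar>K - I\<bar> \<le> M * BV_norm (\<lambda>s. y s - x s)"
proof -
  have "has_RS_integral f (\<lambda>s. y s - x s) (K - I)"
    using has_RS_integral_linear[OF assms(2,1), of 1 "-1"] by simp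
  moreover have "bounded_variation_on 0 1 (\<lambda>s. y s - x s)"
    using assms(4,5) unfolding CBV_def by (simp add: bounded_variation_on_diff)
  ultimately have "\<bar>K - I\<bar> \<le> M * variation_on 0 1 (\<lambda>s. y s - x s)"
    using assms(3) has_RS_integral_abs_le by blast
  also have "\<dots> \<le> M * BV_norm (\<lambda>s. y s - x s)"
    unfolding BV_norm_def using uniform_bound_nonneg[OF assms(3)] by (intro mult_left_mono) auto
  finally show ?thesis .
qed

lemma Omega_hat_bounded:
  assumes "A \<in> Omega_hat"
  shows "\<exists>M. \<forall>s\<in>{0..1}. \<bar>A s\<bar> \<le> M"
proof -
  consider "A \<in> Omega" | "continuous_on {0..1} A" | "bounded_variation_on 0 1 A"
    using assms unfolding Omega_hat_def by blast
  then show ?thesis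
  proof cases
    case 1
    then show ?thesis
      unfolding Omega_def bounded_on_def by blast
  next
    case 2
    then have "bounded (A ` {0..1})"
      by (intro compact_imp_bounded compact_continuous_image) auto
    then show ?thesis
      unfolding bounded_iff by auto
  next
    case 3
    then show ?thesis
      using increments_le_imp_bounded[OF increments_le_variation] by blast
  qed
qed

lemma Omega_hat_has_RS_integral:
  assumes "A \<in> Omega_hat" "x \<in> CBV"
  shows "\<exists>I. has_RS_integral A x I"
proof -
  have "continuous_on {0..1} x" "increments_le x (\<lambda>q. variation_on 0 q x)"
    using assms(2) increments_le_variation unfolding CBV_def by auto
  then show ?thesis
    using Omega_hat_imp_osc_plus_BV[OF assms(1)]
    by (intro RS_Cauchy_imp_has_RS_integral RS_Cauchy_if_osc_plus_BV)
qed

(* An unspecified value when the integral does not exist. *)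
definition RS_integral :: "(real \<Rightarrow> real) \<Rightarrow> (real \<Rightarrow> real) \<Rightarrow> real" where
  "RS_integral f g = (THE I. has_RS_integral f g I)"

lemma RS_integral_eq: "has_RS_integral f g I \<Longrightarrow> RS_integral f g = I"
  unfolding RS_integral_def
  by (rule the_equality[where P = "has_RS_integral f g"]) (auto intro: has_RS_integral_unique)

lemma has_RS_integral_RS_integral:
  "A \<in> Omega_hat \<Longrightarrow> x \<in> CBV \<Longrightarrow> has_RS_integral A x (RS_integral A x)"
  using Omega_hat_has_RS_integral RS_integral_eq by metis

lemma RS_integral_linear:
  assumes "A \<in> Omega_hat" "x \<in> CBV" "y \<in> CBV"
  shows "RS_integral A (\<lambda>s. c * x s + a * y s) = c * RS_integral A x + a * RS_integral A y"
  using assms by (intro RS_integral_eq has_RS_integral_linear has_RS_integral_RS_integral)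

lemma RS_integral_Lipschitz:
  assumes "A \<in> Omega_hat"
  obtains M where "0 \<le> M"
    and "\<And>x y. x \<in> CBV \<Longrightarrow> y \<in> CBV \<Longrightarrow>
      \<bar>RS_integral A y - RS_integral A x\<bar> \<le> M * BV_norm (\<lambda>s. y s - x s)"
proof -
  obtain M where M: "\<forall>s\<in>{0..1}. \<bar>A s\<bar> \<le> M"
    using Omega_hat_bounded[OF assms] by blast
  moreover have "0 \<le> M"
    using M by (rule uniform_bound_nonneg)
  ultimately show ?thesis
    using that has_RS_integral_diff_abs_le has_RS_integral_RS_integral[OF assms] by blast
qed

theorem corollary4p13:
  fixes A :: "real \<Rightarrow> real"
  assumes "A \<in> Omega_hat"
  shows "\<exists>J :: (real \<Rightarrow> real) \<Rightarrow> real.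
           (\<forall>x\<in>CBV. has_RS_integral A x (J x)) \<and>
           (\<forall>x\<in>CBV. \<forall>y\<in>CBV. \<forall>c a :: real. J (\<lambda>s. c * x s + a * y s) = c * J x + a * J y) \<and>
           (\<forall>x\<in>CBV. \<forall>\<epsilon>>0. \<exists>\<delta>>0. \<forall>y\<in>CBV.
              BV_norm (\<lambda>s. y s - x s) < \<delta> \<longrightarrow> \<bar>J y - J x\<bar> < \<epsilon>)"
proof -
  obtain M where "0 \<le> M" and Lipschitz: "\<And>x y. x \<in> CBV \<Longrightarrow> y \<in> CBV \<Longrightarrow>
      \<bar>RS_integral A y - RS_integral A x\<bar> \<le> M * BV_norm (\<lambda>s. y s - x s)"
    using RS_integral_Lipschitz[OF assms] by blast
  have continuous: "\<bar>RS_integral A y - RS_integral A x\<bar> < \<epsilon>"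
    if "x \<in> CBV" "y \<in> CBV" "\<epsilon> > 0" "BV_norm (\<lambda>s. y s - x s) < \<epsilon> / (M + 1)" for x y \<epsilon>
  proof -
    have "\<bar>RS_integral A y - RS_integral A x\<bar> \<le> M * (\<epsilon> / (M + 1))"
      using Lipschitz[OF that(1,2)] that(4) \<open>0 \<le> M\<close> by (meson less_imp_le mult_left_mono order_trans)
    also have "\<dots> < \<epsilon>"
      using \<open>0 \<le> M\<close> that(3) by (simp add: field_simps)
    finally show ?thesis .
  qed
  moreover have "\<epsilon> / (M + 1) > 0" if "\<epsilon> > 0" for \<epsilon>
    using \<open>0 \<le> M\<close> that by simp
  ultimately show ?thesis
    using has_RS_integral_RS_integral[OF assms] RS_integral_linear[OF assms]
    by (intro exI[of _ "RS_integral A"]) blast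
qed

end
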